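(* Let $\Gamma\in\mathbb{R}^{n\times m}$ and let $R:\mathbb{R}^n_{\ge0}\to\mathbb{R}^m$ be locally Lipschitz, such that the system $\dot S=\Gamma R(S)$ leaves $\mathbb{R}^n_{\ge0}$ invariant and is forward complete (every solution starting in $\mathbb{R}^n_{\ge0}$ is defined and stays in $\mathbb{R}^n_{\ge0}$ for all $t\ge0$). Fix $\sigma\in\mathbb{R}^n_{\ge0}$ and consider $\dot x=R(\sigma+\Gamma x)$ on $X_\sigma=\{x\in\mathbb{R}^m:\sigma+\Gamma x\ge0\}$. Then every solution of this system with initial condition in $X_\sigma$ is defined for all $t\ge0$ and remains in $X_\sigma$. Furthermore, if every solution of $\dot S=\Gamma R(S)$ in $\mathbb{R}^n_{\ge0}$ is bounded, then for every solution $x(t)$ of $\dot x=R(\sigma+\Gamma x)$ on $X_\sigma$, $\Gamma x(t)$ is bounded for $t\ge0$.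
   Context: Inequalities between vectors are componentwise. *)

theory Defs
  imports "HOL-Analysis.Analysis"
begin

definition nonneg_orthant :: "(real ^ 'n) set" where
  "nonneg_orthant = {S. \<forall>i. 0 \<le> S $ i}"

definition is_solution ::
  "(real \<Rightarrow> 'a::real_normed_vector) \<Rightarrow> ('a \<Rightarrow> 'a) \<Rightarrow> 'a set \<Rightarrow> real set \<Rightarrow> bool" where
  "is_solution x f D J \<longleftrightarrow>
     (\<forall>t\<in>J. x t \<in> D \<and> (x has_vector_derivative f (x t)) (at t within J))"

definition forward_complete :: "('a::real_normed_vector \<Rightarrow> 'a) \<Rightarrow> 'a set \<Rightarrow> bool" where
  "forward_complete f D \<longleftrightarrow>
     (\<forall>x0\<in>D. \<exists>x. x 0 = x0 \<and> is_solution x f D {0..}) \<and>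
     (\<forall>T>0. \<forall>y. is_solution y f D {0..<T} \<longrightarrow>
        (\<exists>x. is_solution x f D {0..} \<and> (\<forall>t\<in>{0..<T}. x t = y t)))"

end

theory Submission
  imports Defs
begin

text \<open>If \<open>x\<close> solves \<open>x' = g (\<sigma> + L x)\<close>, then \<open>S = \<sigma> + L x\<close> solves \<open>S' = L (g S)\<close>.
  Conversely, a solution \<open>S\<close> of the latter starting at \<open>\<sigma> + L x\<^sub>0\<close> lifts to
  \<open>x t = x\<^sub>0 + \<integral>\<^sub>0\<^sup>t g (S s) ds\<close>: the curves \<open>\<sigma> + L x\<close> and \<open>S\<close> have the same derivative
  and the same initial value. Hence existence, invariance and extendability of solutions
  transfer from the \<open>S\<close>-system to the \<open>x\<close>-system, and bounds on \<open>S\<close> bound \<open>L x = S - \<sigma>\<close>.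
  The theorem is the case \<open>L = \<Gamma>\<close>, \<open>g = R\<close>.\<close>

lemma has_vector_derivative_integral_atLeast:
  fixes g :: "real \<Rightarrow> 'a::banach"
  assumes "continuous_on {a..} g" and "t \<ge> a"
  shows "((\<lambda>u. integral {a..u} g) has_vector_derivative g t) (at t within {a..})"
proof -
  have "continuous_on {a..t+1} g"
    using assms(1) by (rule continuous_on_subset) auto
  then have "((\<lambda>u. integral {a..u} g) has_vector_derivative g t) (at t within {a..t+1})"
    by (rule integral_has_vector_derivative) (use assms(2) in auto)
  moreover have "at t within {a..t+1} = at t within {a..}"
    by (rule at_within_nhd[where S="{..<t+1}"]) auto
  ultimately show ?thesis by simp
qed

lemma has_vector_derivative_unique_on_convex:
  fixes u v :: "real \<Rightarrow> 'a::real_normed_vector"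
  assumes "convex J"
    and u: "\<And>t. t \<in> J \<Longrightarrow> (u has_vector_derivative w t) (at t within J)"
    and v: "\<And>t. t \<in> J \<Longrightarrow> (v has_vector_derivative w t) (at t within J)"
    and "t\<^sub>0 \<in> J" "u t\<^sub>0 = v t\<^sub>0" "t \<in> J"
  shows "u t = v t"
proof -
  have "((\<lambda>t. u t - v t) has_derivative (\<lambda>h. 0)) (at t within J)" if "t \<in> J" for t
    using has_vector_derivative_diff[OF u v, OF that that]
    by (simp add: has_vector_derivative_def)
  then have "u t - v t = u t\<^sub>0 - v t\<^sub>0"
    by (rule has_derivative_zero_unique[OF \<open>convex J\<close>]) (use assms in auto)
  with \<open>u t\<^sub>0 = v t\<^sub>0\<close> show ?thesis by simp
qed

lemma is_solution_affine_image:
  assumes L: "bounded_linear L"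
    and x: "is_solution x (\<lambda>x. g (\<sigma> + L x)) {x. \<sigma> + L x \<in> D} J"
  shows "is_solution (\<lambda>t. \<sigma> + L (x t)) (\<lambda>S. L (g S)) D J"
  unfolding is_solution_def
proof
  fix t assume "t \<in> J"
  with x have "(x has_vector_derivative g (\<sigma> + L (x t))) (at t within J)"
    and "\<sigma> + L (x t) \<in> D"
    unfolding is_solution_def by auto
  then show "\<sigma> + L (x t) \<in> D \<and>
      ((\<lambda>t. \<sigma> + L (x t)) has_vector_derivative L (g (\<sigma> + L (x t)))) (at t within J)"
    using has_vector_derivative_add[OF has_vector_derivative_const
        bounded_linear.has_vector_derivative[OF L]] by fastforce
qed

lemma is_solution_lift:
  fixes L :: "'b::banach \<Rightarrow> 'a::real_normed_vector"
  assumes L: "bounded_linear L" and g: "continuous_on D g"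
    and S: "is_solution S (\<lambda>S. L (g S)) D {0..}"
    and x\<^sub>0: "\<sigma> + L x\<^sub>0 = S 0"
  obtains x where "x 0 = x\<^sub>0" and "is_solution x (\<lambda>x. g (\<sigma> + L x)) {x. \<sigma> + L x \<in> D} {0..}"
    and "\<And>t. t \<ge> 0 \<Longrightarrow> \<sigma> + L (x t) = S t"
proof -
  have S': "\<And>t. t \<ge> 0 \<Longrightarrow> (S has_vector_derivative L (g (S t))) (at t within {0..})"
    and S_in: "\<And>t. t \<ge> 0 \<Longrightarrow> S t \<in> D"
    using S unfolding is_solution_def by auto
  have "continuous_on {0..} S"
    unfolding continuous_on_eq_continuous_within
    using S' has_vector_derivative_continuous by fastforce
  then have gS: "continuous_on {0..} (\<lambda>t. g (S t))"
    by (rule continuous_on_compose2[OF g]) (use S_in in auto)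
  define x where "x t = x\<^sub>0 + integral {0..t} (\<lambda>s. g (S s))" for t
  have x': "(x has_vector_derivative g (S t)) (at t within {0..})" if "t \<ge> 0" for t
    unfolding x_def
    using has_vector_derivative_add[OF has_vector_derivative_const
        has_vector_derivative_integral_atLeast[OF gS that]] by simp
  have x0: "x 0 = x\<^sub>0"
    by (simp add: x_def)
  have xS: "\<sigma> + L (x t) = S t" if "t \<ge> 0" for t
  proof (rule has_vector_derivative_unique_on_convex[where J="{0..}" and t\<^sub>0=0])
    show "((\<lambda>t. \<sigma> + L (x t)) has_vector_derivative L (g (S t))) (at t within {0..})"
      if "t \<in> {0..}" for t
      using has_vector_derivative_add[OF has_vector_derivative_const
          bounded_linear.has_vector_derivative[OF L x']] that by simp
  qed (use S' x0 x\<^sub>0 that in auto)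
  show ?thesis
  proof
    show "is_solution x (\<lambda>x. g (\<sigma> + L x)) {x. \<sigma> + L x \<in> D} {0..}"
      unfolding is_solution_def using xS S_in x' by auto
  qed (use x0 xS in auto)
qed

lemma forward_complete_affine_pullback:
  fixes L :: "'b::banach \<Rightarrow> 'a::real_normed_vector"
  assumes L: "bounded_linear L" and g: "continuous_on D g"
    and fc: "forward_complete (\<lambda>S. L (g S)) D"
  shows "forward_complete (\<lambda>x. g (\<sigma> + L x)) {x. \<sigma> + L x \<in> D}"
  unfolding forward_complete_def
proof (intro conjI ballI allI impI)
  fix x\<^sub>0 assume "x\<^sub>0 \<in> {x. \<sigma> + L x \<in> D}"
  then have "\<sigma> + L x\<^sub>0 \<in> D" by simp
  then obtain S where S0: "S 0 = \<sigma> + L x\<^sub>0" and S: "is_solution S (\<lambda>S. L (g S)) D {0..}"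
    using fc unfolding forward_complete_def by blast
  obtain x where "x 0 = x\<^sub>0" "is_solution x (\<lambda>x. g (\<sigma> + L x)) {x. \<sigma> + L x \<in> D} {0..}"
    using is_solution_lift[OF L g S S0[symmetric]] by blast
  then show "\<exists>x. x 0 = x\<^sub>0 \<and> is_solution x (\<lambda>x. g (\<sigma> + L x)) {x. \<sigma> + L x \<in> D} {0..}"
    by blast
next
  fix T :: real and y
  assume T: "T > 0" and y: "is_solution y (\<lambda>x. g (\<sigma> + L x)) {x. \<sigma> + L x \<in> D} {0..<T}"
  obtain S where S: "is_solution S (\<lambda>S. L (g S)) D {0..}"
    and S_y: "\<And>t. t \<in> {0..<T} \<Longrightarrow> S t = \<sigma> + L (y t)"
    using fc[unfolded forward_complete_def, THEN conjunct2, rule_format,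
        OF T is_solution_affine_image[OF L y]] by blast
  have "\<sigma> + L (y 0) = S 0"
    using S_y[of 0] T by simp
  then obtain x where x0: "x 0 = y 0"
    and x: "is_solution x (\<lambda>x. g (\<sigma> + L x)) {x. \<sigma> + L x \<in> D} {0..}"
    and x_S: "\<And>t. t \<ge> 0 \<Longrightarrow> \<sigma> + L (x t) = S t"
    using is_solution_lift[OF L g S] by blast
  have "x t = y t" if "t \<in> {0..<T}" for t
  proof (rule has_vector_derivative_unique_on_convex[where J="{0..<T}" and t\<^sub>0=0])
    show "(x has_vector_derivative g (S t)) (at t within {0..<T})" if "t \<in> {0..<T}" for t
    proof (rule has_vector_derivative_within_subset)
      have "(x has_vector_derivative g (\<sigma> + L (x t))) (at t within {0..})"
        using x that unfolding is_solution_def by simp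
      then show "(x has_vector_derivative g (S t)) (at t within {0..})"
        using x_S[of t] that by simp
    qed auto
    show "(y has_vector_derivative g (S t)) (at t within {0..<T})" if "t \<in> {0..<T}" for t
      using y S_y[OF that] that unfolding is_solution_def by auto
  qed (use x0 T that in auto)
  with x show "\<exists>x. is_solution x (\<lambda>x. g (\<sigma> + L x)) {x. \<sigma> + L x \<in> D} {0..}
      \<and> (\<forall>t\<in>{0..<T}. x t = y t)" by blast
qed

lemma bounded_linear_image_of_pullback_solution:
  assumes L: "bounded_linear L"
    and bdd: "\<And>S. is_solution S (\<lambda>S. L (g S)) D {0..} \<Longrightarrow> bounded (S ` {0..})"
    and x: "is_solution x (\<lambda>x. g (\<sigma> + L x)) {x. \<sigma> + L x \<in> D} {0..}"
  shows "bounded ((\<lambda>t. L (x t)) ` {0..})"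
proof -
  have "bounded ((\<lambda>t. \<sigma> + L (x t)) ` {0..})"
    by (rule bdd[OF is_solution_affine_image[OF L x]])
  then have "bounded ((\<lambda>v. - \<sigma> + v) ` (\<lambda>t. \<sigma> + L (x t)) ` {0..})"
    by (rule bounded_translation)
  then show ?thesis
    by (simp add: image_image)
qed

theorem lemma4:
  fixes \<Gamma> :: "real ^ 'm ^ 'n" and R :: "real ^ 'n \<Rightarrow> real ^ 'm" and \<sigma> :: "real ^ 'n"
  assumes lip: "local_lipschitz (UNIV :: real set) nonneg_orthant (\<lambda>_. R)"
    and fc: "forward_complete (\<lambda>S. \<Gamma> *v R S) nonneg_orthant"
    and sigma: "\<sigma> \<in> nonneg_orthant"
  shows "forward_complete (\<lambda>x. R (\<sigma> + \<Gamma> *v x)) {x. \<sigma> + \<Gamma> *v x \<in> nonneg_orthant}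
    \<and> ((\<forall>S. is_solution S (\<lambda>S. \<Gamma> *v R S) nonneg_orthant {0..} \<longrightarrow> bounded (S ` {0..}))
        \<longrightarrow> (\<forall>x. is_solution x (\<lambda>x. R (\<sigma> + \<Gamma> *v x)) {x. \<sigma> + \<Gamma> *v x \<in> nonneg_orthant} {0..}
               \<longrightarrow> bounded ((\<lambda>t. \<Gamma> *v x t) ` {0..})))"
proof -
  have R: "continuous_on nonneg_orthant R"
    using local_lipschitz_continuous_on[OF lip] by simp
  note \<Gamma> = matrix_vector_mul_bounded_linear[of \<Gamma>]
  show ?thesis
  proof (intro conjI impI allI)
    show "forward_complete (\<lambda>x. R (\<sigma> + \<Gamma> *v x)) {x. \<sigma> + \<Gamma> *v x \<in> nonneg_orthant}"
      by (rule forward_complete_affine_pullback[OF \<Gamma> R fc])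
  next
    fix x
    assume "\<forall>S. is_solution S (\<lambda>S. \<Gamma> *v R S) nonneg_orthant {0..} \<longrightarrow> bounded (S ` {0..})"
      and "is_solution x (\<lambda>x. R (\<sigma> + \<Gamma> *v x)) {x. \<sigma> + \<Gamma> *v x \<in> nonneg_orthant} {0..}"
    then show "bounded ((\<lambda>t. \<Gamma> *v x t) ` {0..})"
      using bounded_linear_image_of_pullback_solution[OF \<Gamma>] by blast
  qed
qed

end
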